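(* Let $p\geq 5$ be an integer and $s=\frac1p$. There exist integers $n_0,n_1>0$ such that $[A_{n,s}^{-1}]=\left[2\left(n-\frac12\right)^s\right]$ for every even integer $n\geq n_0$, and $[B_{n,s}^{-1}]=\left[-2\left(n-\frac12\right)^s\right]$ for every odd integer $n\geq n_1$.
   Context: For an integer $n\geq1$ and real $0<s<1$: $A_{n,s}=\left(\frac{1}{n^s}-\frac{1}{(n+1)^s}\right)+\left(\frac{1}{(n+2)^s}-\frac{1}{(n+3)^s}\right)+\cdots$ and $B_{n,s}=\left(-\frac{1}{n^s}+\frac{1}{(n+1)^s}\right)+\left(-\frac{1}{(n+2)^s}+\frac{1}{(n+3)^s}\right)+\cdots$, i.e. $A_{n,s}=\sum_{k\geq 0}\frac{(-1)^k}{(n+k)^s}$ and $B_{n,s}=-A_{n,s}$. $[x]$ denotes the integer part (floor) of $x$. *)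

theory Defs
  imports "HOL-Analysis.Analysis"
begin

definition A_ns :: "nat \<Rightarrow> real \<Rightarrow> real" where
  "A_ns n s = (\<Sum>k. (-1) ^ k / (real (n + k)) powr s)"

definition B_ns :: "nat \<Rightarrow> real \<Rightarrow> real" where
  "B_ns n s = (\<Sum>k. (-1) ^ (k + 1) / (real (n + k)) powr s)"

end

theory Submission
  imports Defs "HOL-Real_Asymp.Real_Asymp"
begin

(* Group the series A_{n,s} into pairs x^-s - (x+1)^-s with x = n + 2j. Each pair agrees with
   ((x - 1/2)^-s - (x + 3/2)^-s) / 2 up to O(x^(-s-3)), because the quadratic Taylor terms cancel,
   and these differences telescope. Hence A_{n,s} = (n - 1/2)^-s / 2 + O(n^(-s-2)), that is
   1/A_{n,s} = y + O(n^(s-2)) with y = 2 (n - 1/2)^s.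
   On the other hand y^p = 2^(p-1) (2n - 1) is an integer but not the p-th power of an integer,
   so |y^p - m^p| >= 1 for every integer m. Factoring y^p - m^p then shows that y is at distance
   at least 1/(p (2y)^(p-1)), which is of order n^(s-1), from every integer. For large n the first
   error is smaller, so 1/A_{n,s} and y have the same integer part, and B_{n,s} = -A_{n,s} gives
   the claim for B. *)

lemma powr_neg_taylor2_bound:
  fixes s u :: real
  assumes s0: "0 < s" and s1: "s \<le> 1" and u: "\<bar>u\<bar> \<le> 1/2"
  shows "\<bar>(1 + u) powr (-s) - (1 - s*u + s*(s+1)/2 * u^2)\<bar> \<le> 16 * \<bar>u\<bar>^3"
proof (cases "u = 0")
  case False
  define D where "D m v = (-1)^m * pochhammer s m * (1 + v) powr (-s - real m)" for m v
  have DERIV_D: "DERIV (D m) t :> D (Suc m) t" if "-1/2 \<le> t" for m t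
  proof -
    have "DERIV (D m) t :>
        (-1)^m * pochhammer s m * ((-s - real m) * (1 + t) powr (-s - real m - 1))"
      unfolding D_def using that by (auto intro!: derivative_eq_intros)
    then show ?thesis
      by (simp add: D_def pochhammer_Suc algebra_simps)
  qed
  obtain t where t: "if u < 0 then u < t \<and> t < 0 else 0 < t \<and> t < u"
    and taylor:
      "(1 + u) powr (-s) = (\<Sum>m<3. D m 0 / fact m * (u - 0)^m) + D 3 t / fact 3 * (u - 0)^3"
    using Taylor[of 3 D "\<lambda>v. (1 + v) powr (-s)" "-1/2" "1/2" 0 u] DERIV_D u False
    by (force simp: D_def)
  have t_ge: "1/2 \<le> 1 + t"
    using t u by (auto split: if_splits)
  have poly: "(\<Sum>m<3. D m 0 / fact m * (u - 0)^m) = 1 - s*u + s*(s+1)/2 * u^2"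
    by (simp add: D_def numeral_3_eq_3 pochhammer_Suc power2_eq_square fact_numeral)
  have "(1 + t) powr (-s - 3) \<le> (1/2) powr (-s - 3)"
    using t_ge s0 by (intro powr_mono2') auto
  also have "(1/2::real) powr (-s - 3) = 2 powr (s + 3)"
    using powr_minus[of "1/2::real" "s + 3"] by (simp add: powr_divide)
  also have "(2::real) powr (s + 3) \<le> 2 powr 4"
    using s1 by (intro powr_mono) auto
  finally have "(1 + t) powr (-s - 3) \<le> 16"
    by simp
  moreover have "s * (s + 1) * (s + 2) \<le> 1 * 2 * 3"
    using s0 s1 by (intro mult_mono) auto
  ultimately have "s * (s + 1) * (s + 2) * (1 + t) powr (-s - 3) \<le> 6 * 16"
    using s0 by (intro mult_mono) auto
  moreover have "D 3 t = - (s * (s + 1) * (s + 2) * (1 + t) powr (-s - 3))"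
    by (simp add: D_def numeral_3_eq_3 pochhammer_Suc algebra_simps)
  ultimately have "\<bar>D 3 t\<bar> \<le> 6 * 16"
    using s0 by simp
  then have "\<bar>D 3 t / fact 3 * (u - 0)^3\<bar> \<le> 16 * \<bar>u\<bar>^3"
    by (simp add: abs_mult fact_numeral power_abs mult_right_mono)
  then show ?thesis
    using taylor poly by simp
qed simp

lemma inverse_cube_le_diff_inverse_squares:
  fixes x :: real
  assumes "1 < x"
  shows "4 / x^3 \<le> 1 / (x - 1)^2 - 1 / (x + 1)^2"
proof -
  have "1 / (x - 1)^2 - 1 / (x + 1)^2 = ((x + 1)^2 - (x - 1)^2) / ((x - 1)^2 * (x + 1)^2)"
    using assms by (simp add: diff_frac_eq)
  also have "\<dots> = 4 * x / (x^2 - 1)^2"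
    by (simp add: power2_eq_square algebra_simps)
  finally have diff_eq: "1 / (x - 1)^2 - 1 / (x + 1)^2 = 4 * x / (x^2 - 1)^2" .
  have "1 < x^2"
    using assms by (simp add: one_less_power)
  then have "0 < (x^2 - 1)^2"
    by simp
  moreover have "(x^2 - 1)^2 \<le> x^4"
  proof -
    have "(x^2 - 1)^2 = x^4 - (2 * x^2 - 1)"
      by algebra
    with \<open>1 < x^2\<close> show ?thesis
      by linarith
  qed
  ultimately have "4 * x / x^4 \<le> 4 * x / (x^2 - 1)^2"
    using assms by (intro divide_left_mono) auto
  moreover have "4 / x^3 = 4 * x / x^4"
    using assms by (simp add: field_simps power4_eq_xxxx power3_eq_cube)
  ultimately show ?thesis
    by (simp add: diff_eq)
qed

lemma powr_neg_pair_difference_approx: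
  fixes s x :: real
  assumes s0: "0 < s" and s1: "s \<le> 1" and x: "3 \<le> x"
  shows "\<bar>x powr (-s) - (x + 1) powr (-s) - ((x - 1/2) powr (-s) - (x + 3/2) powr (-s)) / 2\<bar>
           \<le> 11 * x powr (-s) * (1 / (x - 1)^2 - 1 / (x + 1)^2)"
proof -
  define t where "t = 1 / x"
  have t: "0 < t" "t \<le> 1/3"
    using x by (auto simp: t_def field_simps)
  define P where "P a = 1 - s*(a*t) + s*(s+1)/2 * (a*t)^2" for a
  define R where "R a = (1 + a*t) powr (-s) - P a" for a
  have R_bound: "\<bar>R a\<bar> \<le> 16 * \<bar>a\<bar>^3 * t^3" if "\<bar>a\<bar> \<le> 3/2" for a
  proof -
    have "\<bar>a\<bar> * t \<le> 3/2 * (1/3)"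
      using that t by (intro mult_mono) auto
    from powr_neg_taylor2_bound[OF s0 s1, of "a*t"] this show ?thesis
      using t by (simp add: R_def P_def abs_mult power_mult_distrib)
  qed
  have shift: "(x + a) powr (-s) = x powr (-s) * (P a + R a)" if "\<bar>a\<bar> \<le> 3/2" for a
  proof -
    have "x + a = x * (1 + a*t)" and "0 < 1 + a*t"
      using x that by (auto simp: t_def field_simps)
    then show ?thesis
      using x by (simp add: R_def powr_mult)
  qed
  have "x powr (-s) - (x + 1) powr (-s) - ((x - 1/2) powr (-s) - (x + 3/2) powr (-s)) / 2
      = x powr (-s) * ((1 - P 1 - (P (-1/2) - P (3/2)) / 2) - R 1 - R (-1/2) / 2 + R (3/2) / 2)"
    using shift[of 1] shift[of "-1/2"] shift[of "3/2"] by (simp add: field_simps)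
  also have "1 - P 1 - (P (-1/2) - P (3/2)) / 2 = 0"
    by (simp add: P_def power2_eq_square field_simps)
  finally have "\<bar>x powr (-s) - (x + 1) powr (-s) - ((x - 1/2) powr (-s) - (x + 3/2) powr (-s)) / 2\<bar>
      = x powr (-s) * \<bar>- R 1 - R (-1/2) / 2 + R (3/2) / 2\<bar>"
    by (simp add: abs_mult)
  also have "\<dots> \<le> x powr (-s) * (44 * t^3)"
  proof (intro mult_left_mono)
    have "\<bar>R 1\<bar> \<le> 16 * t^3" "\<bar>R (-1/2)\<bar> \<le> 2 * t^3" "\<bar>R (3/2)\<bar> \<le> 54 * t^3"
      using R_bound[of 1] R_bound[of "-1/2"] R_bound[of "3/2"] by (simp_all add: power_divide)
    then show "\<bar>- R 1 - R (-1/2) / 2 + R (3/2) / 2\<bar> \<le> 44 * t^3"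
      by (simp add: abs_le_iff)
  qed simp
  also have "\<dots> = 11 * x powr (-s) * (4 / x^3)"
    by (simp add: t_def power_one_over)
  also have "\<dots> \<le> 11 * x powr (-s) * (1 / (x - 1)^2 - 1 / (x + 1)^2)"
    using x by (intro mult_left_mono inverse_cube_le_diff_inverse_squares) auto
  finally show ?thesis .
qed

lemma sums_telescoping_approx:
  fixes a H S :: "nat \<Rightarrow> real"
  assumes "a sums A" and "H \<longlonglongrightarrow> 0" and "S \<longlonglongrightarrow> 0"
    and "\<And>j. \<bar>a j - (H j - H (Suc j))\<bar> \<le> S j - S (Suc j)"
  shows "\<bar>A - H 0\<bar> \<le> S 0"
proof -
  have err: "(\<lambda>j. a j - (H j - H (Suc j))) sums (A - H 0)"
    using sums_diff[OF assms(1) telescope_sums'[OF assms(2)]] by simp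
  have tel: "(\<lambda>j. S j - S (Suc j)) sums S 0"
    using telescope_sums'[OF assms(3)] by simp
  have "A - H 0 \<le> S 0" and "- (A - H 0) \<le> S 0"
    using assms(4) by (intro sums_le[OF _ err tel] sums_le[OF _ sums_minus[OF err] tel];
        simp add: abs_le_iff)+
  then show ?thesis
    by simp
qed

lemma summable_alternating_powr:
  fixes s :: real
  assumes "0 < s" and "0 < n"
  shows "summable (\<lambda>k. (-1) ^ k / real (n + k) powr s)"
proof -
  have "filterlim (\<lambda>k. real (n + k)) at_top sequentially"
    by real_asymp
  then have "(\<lambda>k. real (n + k) powr (-s)) \<longlonglongrightarrow> 0"
    using assms by (intro tendsto_neg_powr) auto
  then have "(\<lambda>k. 1 / real (n + k) powr s) \<longlonglongrightarrow> 0"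
    by (simp add: powr_minus_divide)
  moreover have "1 / real (n + Suc k) powr s \<le> 1 / real (n + k) powr s" for k
    using assms by (intro divide_left_mono powr_mono2) auto
  ultimately show ?thesis
    using summable_Leibniz'(1)[of "\<lambda>k. 1 / real (n + k) powr s"] by simp
qed

lemma B_ns_eq_uminus_A_ns:
  assumes "0 < s" and "0 < n"
  shows "B_ns n s = - A_ns n s"
  using suminf_minus[OF summable_alternating_powr[OF assms]] by (simp add: A_ns_def B_ns_def)

lemma A_ns_sums_pairs:
  fixes s :: real
  assumes "0 < s" and "0 < n"
  shows "(\<lambda>j. real (n + 2*j) powr (-s) - (real (n + 2*j) + 1) powr (-s)) sums A_ns n s"
proof -
  let ?g = "\<lambda>k. (-1) ^ k / real (n + k) powr s"
  have "?g sums A_ns n s"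
    using summable_alternating_powr[OF assms] by (simp add: A_ns_def summable_sums)
  from sums_group[OF this, of 2] have "(\<lambda>j. sum ?g {j*2..<j*2 + 2}) sums A_ns n s"
    by simp
  moreover have
    "sum ?g {j*2..<j*2 + 2} = real (n + 2*j) powr (-s) - (real (n + 2*j) + 1) powr (-s)" for j
  proof -
    have "{j*2..<j*2 + 2} = {2*j, 2*j + 1}"
      by auto
    then show ?thesis
      by (simp add: powr_minus_divide add_ac)
  qed
  ultimately show ?thesis
    by simp
qed

lemma A_ns_approx:
  fixes s :: real and n :: nat
  assumes s0: "0 < s" and s1: "s \<le> 1" and n: "3 \<le> n"
  shows "\<bar>A_ns n s - (real n - 1/2) powr (-s) / 2\<bar> \<le> 11 * real n powr (-s) / (real n - 1)^2"
proof -
  define f where "f x = x powr (-s)" for x :: real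
  define H where "H j = f (real (n + 2*j) - 1/2) / 2" for j
  define S where "S j = 11 * real n powr (-s) / (real (n + 2*j) - 1)^2" for j
  have pairs: "(\<lambda>j. f (real (n + 2*j)) - f (real (n + 2*j) + 1)) sums A_ns n s"
    using A_ns_sums_pairs[OF s0, of n] n by (simp add: f_def)
  have "filterlim (\<lambda>j. real (n + 2*j) - 1/2) at_top sequentially"
    by real_asymp
  then have "H \<longlonglongrightarrow> 0"
    unfolding H_def f_def using s0 by (intro tendsto_divide_zero tendsto_neg_powr) auto
  moreover have "S \<longlonglongrightarrow> 0"
    unfolding S_def by real_asymp
  moreover have
    "\<bar>f (real (n + 2*j)) - f (real (n + 2*j) + 1) - (H j - H (Suc j))\<bar> \<le> S j - S (Suc j)" for j
  proof -
    define x where "x = real (n + 2*j)"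
    have x: "3 \<le> x" "real n \<le> x"
      using n by (auto simp: x_def)
    have H_x: "H j = f (x - 1/2) / 2" "H (Suc j) = f (x + 3/2) / 2"
      by (simp_all add: H_def x_def algebra_simps)
    have S_x: "S j = 11 * real n powr (-s) / (x - 1)^2"
      "S (Suc j) = 11 * real n powr (-s) / (x + 1)^2"
      by (simp_all add: S_def x_def algebra_simps)
    have "\<bar>f x - f (x + 1) - (H j - H (Suc j))\<bar>
        = \<bar>x powr (-s) - (x + 1) powr (-s) - ((x - 1/2) powr (-s) - (x + 3/2) powr (-s)) / 2\<bar>"
      by (simp add: H_x f_def diff_divide_distrib)
    also have "\<dots> \<le> 11 * x powr (-s) * (1 / (x - 1)^2 - 1 / (x + 1)^2)"
      by (rule powr_neg_pair_difference_approx[OF s0 s1 x(1)])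
    also have "\<dots> \<le> 11 * real n powr (-s) * (1 / (x - 1)^2 - 1 / (x + 1)^2)"
    proof (intro mult_right_mono mult_left_mono powr_mono2')
      have "0 \<le> 4 / x^3"
        using x by simp
      with inverse_cube_le_diff_inverse_squares[of x] x
      show "0 \<le> 1 / (x - 1)^2 - 1 / (x + 1)^2"
        by linarith
    qed (use x s0 n in auto)
    also have "\<dots> = S j - S (Suc j)"
      by (simp add: S_x algebra_simps)
    finally show ?thesis
      by (simp add: x_def)
  qed
  ultimately have "\<bar>A_ns n s - H 0\<bar> \<le> S 0"
    by (rule sums_telescoping_approx[OF pairs])
  then show ?thesis
    by (simp add: H_def S_def f_def)
qed

lemma inverse_A_ns_approx:
  fixes s :: real and n :: nat
  assumes s0: "0 < s" and s1: "s \<le> 1" and n: "9 \<le> n"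
  shows "\<bar>inverse (A_ns n s) - 2 * (real n - 1/2) powr s\<bar>
           \<le> 88 * (real n - 1/2) powr s / (real n - 1)^2"
proof -
  define w where "w = real n - 1/2"
  define h where "h = w powr (-s) / 2"
  define d where "d = 22 * h / (real n - 1)^2"
  have w: "1 \<le> w" "w \<le> real n"
    using n by (auto simp: w_def)
  have h: "0 < h"
    using w by (simp add: h_def)
  have inverse_h: "inverse h = 2 * w powr s"
    using w by (simp add: h_def powr_minus_divide)
  have "(8::real)^2 \<le> (real n - 1)^2"
    using n by (intro power_mono) auto
  then have n_sq: "64 \<le> (real n - 1)^2"
    by simp
  have close: "\<bar>A_ns n s - h\<bar> \<le> d"
  proof -
    have "real n powr (-s) \<le> w powr (-s)"
      using w s0 by (intro powr_mono2') auto
    then have "11 * real n powr (-s) / (real n - 1)^2 \<le> d"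
      unfolding d_def h_def by (simp add: divide_right_mono)
    moreover have "3 \<le> n"
      using n by simp
    ultimately show ?thesis
      using A_ns_approx[OF s0 s1] by (fastforce simp: h_def w_def)
  qed
  moreover have "d \<le> h / 2"
    using n_sq h by (simp add: d_def divide_simps)
  ultimately have A_ge: "h / 2 \<le> A_ns n s"
    by (simp add: abs_le_iff)
  have "\<bar>inverse (A_ns n s) - inverse h\<bar> = \<bar>h - A_ns n s\<bar> / (A_ns n s * h)"
    using A_ge h by (simp add: inverse_eq_divide diff_frac_eq abs_divide)
  also have "\<dots> \<le> d / (h / 2 * h)"
    using close A_ge h by (intro frac_le) (auto simp: abs_minus_commute)
  also have "\<dots> = 44 * inverse h / (real n - 1)^2"
    using h by (simp add: d_def field_simps)
  finally show ?thesis
    by (simp add: inverse_h w_def)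
qed

lemma pow2_times_odd_not_int_power:
  fixes m q :: int
  assumes p: "2 \<le> p" and q: "odd q"
  shows "m ^ p \<noteq> 2 ^ (p - 1) * q"
proof
  assume eq: "m ^ p = 2 ^ (p - 1) * q"
  show False
  proof (cases "even m")
    case True
    then obtain k where "m = 2 * k" ..
    then have "m ^ p = 2 ^ (p - 1) * (2 * k ^ p)"
      using p by (simp add: power_mult_distrib flip: power_Suc2)
    with eq have "q = 2 * k ^ p"
      by simp
    with q show False
      by simp
  next
    case False
    then have "odd (m ^ p)"
      by simp
    moreover have "even (2 ^ (p - 1) * q)"
      using p by simp
    ultimately show False
      using eq by simp
  qed
qed

lemma abs_power_diff_le:
  fixes a b c :: real
  assumes a: "0 \<le> a" "a \<le> b" and c: "0 \<le> c" "c \<le> b"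
  shows "\<bar>c ^ p - a ^ p\<bar> \<le> \<bar>c - a\<bar> * (real p * b ^ (p - 1))"
proof -
  have "a ^ (p - Suc i) * c ^ i \<le> b ^ (p - 1)" if "i < p" for i
  proof -
    have "a ^ (p - Suc i) * c ^ i \<le> b ^ (p - Suc i) * b ^ i"
      using a c by (intro mult_mono power_mono) auto
    also have "\<dots> = b ^ (p - Suc i + i)"
      by (rule power_add[symmetric])
    also have "p - Suc i + i = p - 1"
      using that by simp
    finally show ?thesis .
  qed
  then have "(\<Sum>i<p. a ^ (p - Suc i) * c ^ i) \<le> (\<Sum>i<p. b ^ (p - 1))"
    by (intro sum_mono) simp
  moreover have "0 \<le> (\<Sum>i<p. a ^ (p - Suc i) * c ^ i)"
    using a c by (intro sum_nonneg) auto
  ultimately show ?thesis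
    by (simp add: power_diff_sumr2[of c p a] abs_mult mult_left_mono)
qed

lemma abs_diff_of_int_ge_if_power_not_int_power:
  fixes y :: real and N m :: int
  assumes p: "1 \<le> p" and y: "1 \<le> y" and y_pow: "y ^ p = of_int N"
    and not_power: "\<And>k::int. k ^ p \<noteq> N"
  shows "1 / (real p * (2 * y) ^ (p - 1)) \<le> \<bar>y - of_int m\<bar>"
proof -
  define K where "K = real p * (2 * y) ^ (p - 1)"
  have "1 \<le> (2 * y) ^ (p - 1)"
    using y by (intro one_le_power) simp
  then have K: "1 \<le> K"
    using p mult_mono[of 1 "real p" 1 "(2 * y) ^ (p - 1)"] by (simp add: K_def)
  show ?thesis
  proof (cases "\<bar>y - of_int m\<bar> < 1")
    case True
    then have m: "0 \<le> real_of_int m" "real_of_int m \<le> 2 * y"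
      using y by linarith+
    have "1 \<le> \<bar>N - m ^ p\<bar>"
      using not_power[of m] by linarith
    then have "1 \<le> \<bar>y ^ p - of_int m ^ p\<bar>"
      using y_pow by (metis of_int_1_le_iff of_int_abs of_int_diff of_int_power)
    also have "\<dots> \<le> \<bar>y - of_int m\<bar> * K"
      unfolding K_def using m y by (intro abs_power_diff_le) auto
    finally show ?thesis
      using K by (simp add: K_def pos_divide_le_eq)
  next
    case False
    moreover have "1 / K \<le> 1"
      using K by simp
    ultimately show ?thesis
      by (simp add: K_def)
  qed
qed

lemma shifted_root_power:
  fixes p n :: nat
  assumes p: "1 \<le> p" and n: "2 \<le> n"
  defines "y \<equiv> 2 * (real n - 1/2) powr (1 / real p)"
  shows "y ^ p = 2 ^ p * (real n - 1/2)" and "1 \<le> y"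
proof -
  have w: "1 \<le> real n - 1/2"
    using n by simp
  then have "((real n - 1/2) powr (1 / real p)) ^ p = real n - 1/2"
    using p by (simp add: powr_power)
  then show "y ^ p = 2 ^ p * (real n - 1/2)"
    by (simp add: y_def power_mult_distrib)
  have "1 \<le> (real n - 1/2) powr (1 / real p)"
    using w by (simp add: ge_one_powr_ge_zero)
  then show "1 \<le> y"
    by (simp add: y_def)
qed

lemma shifted_root_far_from_ints:
  fixes p n :: nat and m :: int
  assumes p: "2 \<le> p" and n: "2 \<le> n"
  defines "y \<equiv> 2 * (real n - 1/2) powr (1 / real p)"
  shows "1 / (real p * (2 * y) ^ (p - 1)) \<le> \<bar>y - of_int m\<bar>"
proof (rule abs_diff_of_int_ge_if_power_not_int_power)
  have "(2::real) ^ p = 2 ^ (p - 1) * 2"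
    using p by (simp flip: power_Suc2)
  then show "y ^ p = of_int (2 ^ (p - 1) * (2 * int n - 1))"
    using shifted_root_power(1)[of p n] p n by (simp add: y_def algebra_simps)
  show "k ^ p \<noteq> 2 ^ (p - 1) * (2 * int n - 1)" for k :: int
    using pow2_times_odd_not_int_power[OF p] by simp
qed (use shifted_root_power(2)[of p n] p n in \<open>simp_all add: y_def\<close>)

lemma shifted_root_error_lt_gap:
  fixes p n :: nat
  assumes p: "2 \<le> p" and n: "22 * p * 4 ^ p + 2 \<le> n"
  defines "y \<equiv> 2 * (real n - 1/2) powr (1 / real p)"
  shows "44 * y / (real n - 1)^2 < 1 / (real p * (2 * y) ^ (p - 1))"
proof -
  define c where "c = 22 * real p * 4 ^ p"
  have "real (22 * p * 4 ^ p + 2) \<le> real n"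
    using n by (simp only: of_nat_le_iff)
  then have c: "0 \<le> c" "c + 2 \<le> real n"
    by (simp_all add: c_def)
  then have y: "y ^ p = 2 ^ p * (real n - 1/2)" "1 \<le> y"
    using shifted_root_power[of p n] p by (simp_all add: y_def)
  obtain q where q: "p = Suc q"
    using p by (cases p) auto
  have "44 * y * (real p * (2 * y) ^ (p - 1)) = 22 * real p * 2 ^ p * y ^ p"
    by (simp add: q power_mult_distrib)
  also have "\<dots> = c * (real n - 1/2)"
    by (simp add: y c_def mult.assoc flip: power_mult_distrib)
  also have "\<dots> < (real n - 1)^2"
  proof -
    have "(c + 1) * (real n - 1) \<le> (real n - 1) * (real n - 1)"
      using c by (intro mult_right_mono) auto
    with c show ?thesis
      by (simp add: power2_eq_square algebra_simps; linarith)
  qed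
  finally show ?thesis
    using p y(2) c by (simp add: divide_simps mult.commute)
qed

lemma inverse_A_ns_closer_than_ints:
  fixes p n :: nat and m :: int
  assumes p: "2 \<le> p" and n: "22 * p * 4 ^ p + 2 \<le> n"
  defines "y \<equiv> 2 * (real n - 1/2) powr (1 / real p)"
  shows "\<bar>inverse (A_ns n (1 / real p)) - y\<bar> < \<bar>y - of_int m\<bar>"
proof -
  have "1 \<le> p * 4 ^ p"
    using p by simp
  then have n9: "9 \<le> n"
    using n by linarith
  have "\<bar>inverse (A_ns n (1 / real p)) - y\<bar> \<le> 44 * y / (real n - 1)^2"
    using inverse_A_ns_approx[of "1 / real p" n] p n9 by (simp add: y_def)
  also have "\<dots> < 1 / (real p * (2 * y) ^ (p - 1))"
    using shifted_root_error_lt_gap[OF p n] by (simp add: y_def)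
  also have "\<dots> \<le> \<bar>y - of_int m\<bar>"
    using shifted_root_far_from_ints[OF p, of n m] n9 by (simp add: y_def)
  finally show ?thesis .
qed

lemma floor_eq_if_closer_than_ints:
  fixes y z :: real
  assumes "\<And>m::int. \<bar>z - y\<bar> < \<bar>y - of_int m\<bar>"
  shows "\<lfloor>z\<rfloor> = \<lfloor>y\<rfloor>"
proof (rule floor_unique)
  show "of_int \<lfloor>y\<rfloor> \<le> z"
    using assms[of "\<lfloor>y\<rfloor>"] by linarith
  show "z < of_int \<lfloor>y\<rfloor> + 1"
    using assms[of "\<lfloor>y\<rfloor> + 1"] by linarith
qed

lemma floor_uminus_eq_if_closer_than_ints:
  fixes y z :: real
  assumes "\<And>m::int. \<bar>z - y\<bar> < \<bar>y - of_int m\<bar>"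
  shows "\<lfloor>- z\<rfloor> = \<lfloor>- y\<rfloor>"
proof (rule floor_eq_if_closer_than_ints)
  fix m :: int
  show "\<bar>- z - - y\<bar> < \<bar>- y - of_int m\<bar>"
    using assms[of "- m"] by linarith
qed

theorem corollary3p3:
  fixes p :: nat and s :: real
  assumes "p \<ge> 5" and "s = 1 / real p"
  shows "\<exists>n0 n1 :: nat. n0 > 0 \<and> n1 > 0 \<and>
    (\<forall>n. even n \<and> n \<ge> n0 \<longrightarrow>
        \<lfloor>inverse (A_ns n s)\<rfloor> = \<lfloor>2 * (real n - 1 / 2) powr s\<rfloor>) \<and>
    (\<forall>n. odd n \<and> n \<ge> n1 \<longrightarrow>
        \<lfloor>inverse (B_ns n s)\<rfloor> = \<lfloor>- 2 * (real n - 1 / 2) powr s\<rfloor>)"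
proof -
  define N where "N = 22 * p * 4 ^ p + 2"
  have p: "2 \<le> p"
    using assms(1) by simp
  have closer: "\<bar>inverse (A_ns n s) - 2 * (real n - 1/2) powr s\<bar>
      < \<bar>2 * (real n - 1/2) powr s - of_int m\<bar>" if "N \<le> n" for n m
    using inverse_A_ns_closer_than_ints[OF p, of n m] that by (simp add: N_def assms(2))
  have inverse_B_ns: "inverse (B_ns n s) = - inverse (A_ns n s)" if "N \<le> n" for n
    using B_ns_eq_uminus_A_ns[of s n] that p by (simp add: assms(2) N_def)
  have "0 < N"
    by (simp add: N_def)
  moreover have "\<lfloor>inverse (A_ns n s)\<rfloor> = \<lfloor>2 * (real n - 1/2) powr s\<rfloor>"
    if "N \<le> n" for n
    using closer[OF that] by (rule floor_eq_if_closer_than_ints)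
  moreover have "\<lfloor>inverse (B_ns n s)\<rfloor> = \<lfloor>- 2 * (real n - 1/2) powr s\<rfloor>"
    if "N \<le> n" for n
    using floor_uminus_eq_if_closer_than_ints[OF closer[OF that]] inverse_B_ns[OF that] by simp
  ultimately show ?thesis
    by blast
qed

end
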